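(* Let $K$ be a field and $X$ a finite connected poset. The kernel $N=\{\varphi\in\mathrm{LAut}(I(X,K)): \widetilde\varphi=\mathrm{id}\}$ of the homomorphism $\varphi\mapsto\widetilde\varphi$ coincides with $\mathrm{Inn}_1(I(X,K))$, the group of conjugations $f\mapsto\beta f\beta^{-1}$ by elements $\beta\in I(X,K)$ with $\beta(x,x)=1$ for all $x\in X$.
   Context: $I(X,K)$ is the incidence algebra: functions $f:X\times X\to K$ with $f(x,y)=0$ unless $x\le y$, product $(fg)(x,y)=\sum_{x\le t\le y}f(x,t)g(t,y)$; $e_{xy}$ ($x\le y$) is the basis element equal to $1$ at $(x,y)$ and $0$ elsewhere. $\mathrm{LAut}(I(X,K))$ is the group of bijective linear maps preserving $[f,g]=fg-gf$. Let $l(\lfloor x,y\rfloor)$ be the maximum length of a chain in $\{z:x\le z\le y\}$, $L_i=\mathrm{span}_K\{e_{xy}: l(\lfloor x,y\rfloor)=i\}$ ($i\ge0$). For $\varphi\in\mathrm{LAut}(I(X,K))$, $\widetilde\varphi$ is the linear map sending $e_{xy}\in L_i$ to the $L_i$-component of $\varphi(e_{xy})$ in $I(X,K)=\bigoplus_iL_i$. Connected means any two elements are joined by a sequence in which consecutive elements are in a covering relation. *)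

theory Defs
  imports Main "HOL-Library.Function_Algebras"
begin

definition incidence :: "('a::{order,finite} \<Rightarrow> 'a \<Rightarrow> 'k::field) set" where
  "incidence = {f. \<forall>x y. \<not> x \<le> y \<longrightarrow> f x y = 0}"

definition imult :: "('a::{order,finite} \<Rightarrow> 'a \<Rightarrow> 'k::field) \<Rightarrow> ('a \<Rightarrow> 'a \<Rightarrow> 'k) \<Rightarrow> 'a \<Rightarrow> 'a \<Rightarrow> 'k" where
  "imult f g = (\<lambda>x y. \<Sum>t\<in>{t. x \<le> t \<and> t \<le> y}. f x t * g t y)"

definition iunit :: "'a::{order,finite} \<Rightarrow> 'a \<Rightarrow> 'k::field" where
  "iunit = (\<lambda>x y. if x = y then 1 else 0)"

definition ebas :: "'a::{order,finite} \<Rightarrow> 'a \<Rightarrow> 'a \<Rightarrow> 'a \<Rightarrow> 'k::field" where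
  "ebas x y = (\<lambda>u v. if u = x \<and> v = y then 1 else 0)"

definition ibracket :: "('a::{order,finite} \<Rightarrow> 'a \<Rightarrow> 'k::field) \<Rightarrow> ('a \<Rightarrow> 'a \<Rightarrow> 'k) \<Rightarrow> 'a \<Rightarrow> 'a \<Rightarrow> 'k" where
  "ibracket f g = imult f g - imult g f"

definition LAut :: "(('a::{order,finite} \<Rightarrow> 'a \<Rightarrow> 'k::field) \<Rightarrow> ('a \<Rightarrow> 'a \<Rightarrow> 'k)) set" where
  "LAut = {\<phi>. bij_betw \<phi> incidence incidence
      \<and> (\<forall>f\<in>incidence. \<forall>g\<in>incidence. \<phi> (f + g) = \<phi> f + \<phi> g)
      \<and> (\<forall>c. \<forall>f\<in>incidence. \<phi> (\<lambda>x y. c * f x y) = (\<lambda>x y. c * \<phi> f x y))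
      \<and> (\<forall>f\<in>incidence. \<forall>g\<in>incidence. \<phi> (ibracket f g) = ibracket (\<phi> f) (\<phi> g))}"

definition ilen :: "'a::{order,finite} \<Rightarrow> 'a \<Rightarrow> nat" where
  "ilen x y = Max {card C - 1 | C. C \<subseteq> {x..y} \<and> C \<noteq> {} \<and> Complete_Partial_Order.chain (\<le>) C}"

definition Lcomp :: "nat \<Rightarrow> ('a::{order,finite} \<Rightarrow> 'a \<Rightarrow> 'k::field) \<Rightarrow> 'a \<Rightarrow> 'a \<Rightarrow> 'k" where
  "Lcomp i f = (\<lambda>u v. if u \<le> v \<and> ilen u v = i then f u v else 0)"

text \<open>\<phi>~: the linear map sending e_xy (in L_i, i = l(\<lfloor>x,y\<rfloor>)) to the L_i-component of \<phi>(e_xy).\<close>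
definition tilde :: "(('a::{order,finite} \<Rightarrow> 'a \<Rightarrow> 'k::field) \<Rightarrow> ('a \<Rightarrow> 'a \<Rightarrow> 'k))
    \<Rightarrow> ('a \<Rightarrow> 'a \<Rightarrow> 'k) \<Rightarrow> 'a \<Rightarrow> 'a \<Rightarrow> 'k" where
  "tilde \<phi> f = (\<Sum>p\<in>{p. fst p \<le> snd p}.
      (\<lambda>u v. f (fst p) (snd p) * Lcomp (ilen (fst p) (snd p)) (\<phi> (ebas (fst p) (snd p))) u v))"

definition covers :: "'a::order \<Rightarrow> 'a \<Rightarrow> bool" where
  "covers x y \<longleftrightarrow> x < y \<and> \<not> (\<exists>z. x < z \<and> z < y)"

definition poset_connected :: "'a::order itself \<Rightarrow> bool" where
  "poset_connected _ \<longleftrightarrow> (\<forall>x y::'a. (\<lambda>a b. covers a b \<or> covers b a)\<^sup>*\<^sup>* x y)"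

definition Inn1 :: "(('a::{order,finite} \<Rightarrow> 'a \<Rightarrow> 'k::field) \<Rightarrow> ('a \<Rightarrow> 'a \<Rightarrow> 'k)) \<Rightarrow> bool" where
  "Inn1 \<phi> \<longleftrightarrow> (\<exists>\<beta> \<gamma>. \<beta> \<in> incidence \<and> \<gamma> \<in> incidence \<and> (\<forall>x. \<beta> x x = 1)
      \<and> imult \<beta> \<gamma> = iunit \<and> imult \<gamma> \<beta> = iunit
      \<and> (\<forall>f\<in>incidence. \<phi> f = imult (imult \<beta> f) \<gamma>))"

end

theory Submission
  imports Defs
begin

text \<open>If \<open>\<phi>~ = id\<close>, the images \<open>F u = \<phi>(e_uu)\<close> commute pairwise, since the \<open>e_uu\<close> do, and
  have diagonal \<open>e_uu\<close>. Solving the unitriangular systems \<open>F v b = b\<close> column by column gives a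
  unit-diagonal \<open>\<beta>\<close> with \<open>F u \<beta> = \<beta> e_uu\<close> for all \<open>u\<close>. After conjugating by \<open>\<beta>\<^sup>-\<^sup>1\<close>, \<open>\<phi>\<close> fixes every
  \<open>e_uu\<close>, so it maps \<open>e_xy\<close> (\<open>x < y\<close>) to a common eigenvector of all \<open>ad e_uu\<close> with the
  eigenvalues of \<open>e_xy\<close>, that is, to a multiple \<open>c e_xy\<close>. Conjugation by a unit-diagonal element
  changes \<open>e_xy\<close> only on intervals strictly containing \<open>[x,y]\<close>, which are strictly longer; hence the
  \<open>L_l(x,y)\<close>-component of \<open>\<phi>(e_xy) = c \<beta> e_xy \<beta>\<^sup>-\<^sup>1\<close> is \<open>c e_xy\<close>, and \<open>\<phi>~ = id\<close> forces \<open>c = 1\<close>.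
  The same observation shows that conversely every such conjugation has \<open>\<phi>~ = id\<close>.\<close>

section \<open>The incidence algebra\<close>

lemma sum_fun_apply: "sum F A x = (\<Sum>a\<in>A. F a x)"
  by (induction A rule: infinite_finite_induct) auto

lemma incidenceI: "(\<And>x y. \<not> x \<le> y \<Longrightarrow> f x y = 0) \<Longrightarrow> f \<in> incidence"
  by (auto simp: incidence_def)

lemma incidenceD: "f \<in> incidence \<Longrightarrow> \<not> x \<le> y \<Longrightarrow> f x y = 0"
  by (auto simp: incidence_def)

lemma incidence_zero: "0 \<in> incidence"
  by (simp add: incidence_def)

lemma incidence_add: "f \<in> incidence \<Longrightarrow> g \<in> incidence \<Longrightarrow> f + g \<in> incidence"
  by (simp add: incidence_def)

lemma incidence_smult: "f \<in> incidence \<Longrightarrow> (\<lambda>x y. c * f x y) \<in> incidence"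
  by (simp add: incidence_def)

lemma incidence_sum: "(\<And>p. p \<in> S \<Longrightarrow> F p \<in> incidence) \<Longrightarrow> sum F S \<in> incidence"
  by (induction S rule: infinite_finite_induct) (auto simp: incidence_def)

lemma incidence_ebas: "x \<le> y \<Longrightarrow> ebas x y \<in> incidence"
  by (simp add: incidence_def ebas_def)

lemma incidence_imult: "imult f g \<in> incidence"
  unfolding incidence_def imult_def by (auto intro!: sum.neutral dest: order_trans)

lemma incidence_ibracket: "ibracket f g \<in> incidence"
  using incidence_imult[of f g] incidence_imult[of g f] by (simp add: ibracket_def incidence_def)

lemma interval_empty: "\<not> x \<le> v \<Longrightarrow> {t. x \<le> t \<and> (t::'a::order) \<le> v} = {}"
  by (auto dest: order_trans)

lemma sum_interval_refl: "(\<Sum>t\<in>{t. v \<le> t \<and> t \<le> (v::'a::order)}. h t) = h v"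
proof -
  have "{t. v \<le> t \<and> t \<le> v} = {v}" by auto
  then show ?thesis by simp
qed

lemma sum_interval_bottom:
  assumes "(x::'a::{order,finite}) \<le> v"
  shows "(\<Sum>t\<in>{t. x \<le> t \<and> t \<le> v}. h t) = h x + (\<Sum>t\<in>{t. x < t \<and> t \<le> v}. h t)"
proof -
  have "{t. x \<le> t \<and> t \<le> v} = insert x {t. x < t \<and> t \<le> v}"
    using assms by (auto simp: order_less_le)
  then show ?thesis by simp
qed

lemma imult_diag: "imult f g x x = f x x * g x x"
  by (simp add: imult_def sum_interval_refl)

lemma imult_assoc: "imult (imult f g) h = imult f (imult g h)"
proof (intro ext)
  fix x y :: 'a
  let ?T = "{t. x \<le> t \<and> t \<le> y}"
  have "imult (imult f g) h x y = (\<Sum>t\<in>?T. \<Sum>s\<in>{s. x \<le> s \<and> s \<le> t}. f x s * g s t * h t y)"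
    by (simp add: imult_def sum_distrib_right)
  also have "\<dots> = (\<Sum>t\<in>?T. \<Sum>s\<in>{s\<in>?T. s \<le> t}. f x s * g s t * h t y)"
    by (intro sum.cong refl) (auto dest: order_trans)
  also have "\<dots> = (\<Sum>s\<in>?T. \<Sum>t\<in>{t\<in>?T. s \<le> t}. f x s * g s t * h t y)"
    by (rule sum.swap_restrict) auto
  also have "\<dots> = (\<Sum>s\<in>?T. \<Sum>t\<in>{t. s \<le> t \<and> t \<le> y}. f x s * g s t * h t y)"
    by (intro sum.cong refl) (auto dest: order_trans)
  also have "\<dots> = imult f (imult g h) x y"
    by (simp add: imult_def sum_distrib_left mult.assoc)
  finally show "imult (imult f g) h x y = imult f (imult g h) x y" .
qed

lemma imult_ebas_right:
  "imult f (ebas x y) u v = (if v = y \<and> u \<le> x \<and> x \<le> y then f u x else 0)"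
  unfolding imult_def ebas_def by (cases "v = y") (auto simp: if_distrib[of "(*) _"] cong: if_cong)

lemma imult_ebas_left:
  "imult (ebas x y) g u v = (if u = x \<and> x \<le> y \<and> y \<le> v then g y v else 0)"
  unfolding imult_def ebas_def by (cases "u = x") (auto simp: if_distrib[of "\<lambda>c. c * _"] cong: if_cong)

lemma imult_iunit_left: "f \<in> incidence \<Longrightarrow> imult iunit f = f"
  by (intro ext) (simp add: iunit_def imult_def if_distrib[of "\<lambda>c. c * _"] incidenceD cong: if_cong)

lemma imult_iunit_right: "f \<in> incidence \<Longrightarrow> imult f iunit = f"
  by (intro ext) (simp add: iunit_def imult_def if_distrib[of "(*) _"] incidenceD cong: if_cong)

lemma imult_add_left: "imult (f + g) h = imult f h + imult g h"
  by (intro ext) (simp add: imult_def algebra_simps sum.distrib)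

lemma imult_add_right: "imult h (f + g) = imult h f + imult h g"
  by (intro ext) (simp add: imult_def algebra_simps sum.distrib)

lemma imult_diff_left: "imult (f - g) h = imult f h - imult g h"
  by (intro ext) (simp add: imult_def algebra_simps sum_subtractf)

lemma imult_diff_right: "imult h (f - g) = imult h f - imult h g"
  by (intro ext) (simp add: imult_def algebra_simps sum_subtractf)

lemma imult_smult_left: "imult (\<lambda>x y. c * f x y) h = (\<lambda>x y. c * imult f h x y)"
  by (simp add: imult_def algebra_simps sum_distrib_left)

lemma imult_smult_right: "imult h (\<lambda>x y. c * f x y) = (\<lambda>x y. c * imult h f x y)"
  by (simp add: imult_def algebra_simps sum_distrib_left)

section \<open>Unitriangular systems\<close>

function back_subst :: "('a::{order,finite} \<Rightarrow> 'a \<Rightarrow> 'k::field) \<Rightarrow> 'a \<Rightarrow> 'a \<Rightarrow> 'k" where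
  "back_subst f v x = (if x = v then 1 else if x < v then
      (\<Sum>t\<in>{t. x < t \<and> t \<le> v}. f x t * back_subst f v t) else 0)"
  by auto
termination
  by (relation "measure (\<lambda>(f, v, x). card {s. x < s})") (auto intro!: psubset_card_mono)

declare back_subst.simps [simp del]

lemma back_subst_self: "back_subst f v v = 1"
  by (simp add: back_subst.simps)

lemma back_subst_less: "x < v \<Longrightarrow> back_subst f v x = (\<Sum>t\<in>{t. x < t \<and> t \<le> v}. f x t * back_subst f v t)"
  by (simp add: back_subst.simps)

lemma back_subst_eq_0: "\<not> x \<le> v \<Longrightarrow> back_subst f v x = 0"
  by (auto simp: back_subst.simps)

lemma incidence_back_subst: "(\<lambda>x v. back_subst (F v) v x) \<in> incidence"
  by (simp add: incidenceI back_subst_eq_0)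

lemma back_subst_fixed:
  assumes "F v v = 1" and "x \<noteq> v \<Longrightarrow> F x x = 0"
  shows "(\<Sum>t\<in>{t. x \<le> t \<and> t \<le> v}. F x t * back_subst F v t) = back_subst F v x"
proof (cases "x \<le> v")
  case False
  then show ?thesis by (simp add: interval_empty back_subst_eq_0)
next
  case True
  then show ?thesis
    using assms by (cases "x = v") (simp_all add: sum_interval_refl sum_interval_bottom back_subst_self back_subst_less)
qed

lemma unit_diag_right_inverse:
  assumes "\<forall>x. \<beta> x x = 1"
  shows "\<exists>\<gamma>\<in>incidence. (\<forall>x. \<gamma> x x = 1) \<and> imult \<beta> \<gamma> = iunit"
proof (intro bexI conjI allI ext)
  define \<gamma> where "\<gamma> = (\<lambda>x v. back_subst (\<lambda>a b. - \<beta> a b) v x)"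
  show "\<gamma> \<in> incidence" unfolding \<gamma>_def by (rule incidence_back_subst)
  show "\<gamma> x x = 1" for x by (simp add: \<gamma>_def back_subst_self)
  show "imult \<beta> \<gamma> x v = iunit x v" for x v
  proof (cases "x < v")
    case True
    then have "imult \<beta> \<gamma> x v = \<gamma> x v + (\<Sum>t\<in>{t. x < t \<and> t \<le> v}. \<beta> x t * \<gamma> t v)"
      using assms by (simp add: imult_def sum_interval_bottom)
    also have "\<gamma> x v = - (\<Sum>t\<in>{t. x < t \<and> t \<le> v}. \<beta> x t * \<gamma> t v)"
      using True by (simp add: \<gamma>_def back_subst_less sum_negf)
    finally show ?thesis using True by (simp add: iunit_def)
  next
    case False
    then consider "x = v" | "\<not> x \<le> v" by fastforce
    then show ?thesis
    proof cases
      case 1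
      then show ?thesis using assms by (simp add: imult_diag iunit_def \<gamma>_def back_subst_self)
    next
      case 2
      then show ?thesis by (auto simp: imult_def iunit_def interval_empty)
    qed
  qed
qed

lemma unit_diag_invertible:
  assumes "\<beta> \<in> incidence" "\<forall>x. \<beta> x x = 1"
  obtains \<gamma> where "\<gamma> \<in> incidence" "\<forall>x. \<gamma> x x = 1" "imult \<beta> \<gamma> = iunit" "imult \<gamma> \<beta> = iunit"
proof -
  obtain \<gamma> where \<gamma>: "\<gamma> \<in> incidence" "\<forall>x. \<gamma> x x = 1" "imult \<beta> \<gamma> = iunit"
    using unit_diag_right_inverse assms(2) by blast
  obtain \<delta> where \<delta>: "\<delta> \<in> incidence" "imult \<gamma> \<delta> = iunit"
    using unit_diag_right_inverse \<gamma>(2) by blast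
  have "\<beta> = imult (imult \<beta> \<gamma>) \<delta>"
    by (simp add: imult_assoc \<delta>(2) imult_iunit_right assms(1))
  also have "\<dots> = \<delta>" by (simp add: \<gamma>(3) imult_iunit_left \<delta>(1))
  finally have "imult \<gamma> \<beta> = iunit" using \<delta>(2) by simp
  then show ?thesis by (rule that[OF \<gamma>])
qed

lemma fixed_column_eq_0:
  fixes W :: "'a::{order,finite} \<Rightarrow> 'k::field"
  assumes fixed: "\<And>x. (\<Sum>t\<in>{t. x \<le> t \<and> t \<le> v}. G x t * W t) = W x"
    and "W v = 0" and G: "\<And>x. x \<noteq> v \<Longrightarrow> G x x = 0"
  shows "W x = 0"
proof (induction "card {s. x < s}" arbitrary: x rule: less_induct)
  case less
  show ?case
  proof (cases "x < v")
    case True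
    have "W t = 0" if "x < t" for t
      using that by (intro less) (auto intro!: psubset_card_mono)
    then show ?thesis
      using fixed[of x] G[of x] True by (simp add: sum_interval_bottom)
  next
    case False
    then show ?thesis
      using fixed[of x] \<open>W v = 0\<close> by (cases "x = v") (auto simp: interval_empty)
  qed
qed

lemma commuting_family_simultaneous_conj:
  fixes F :: "'a::{order,finite} \<Rightarrow> 'a \<Rightarrow> 'a \<Rightarrow> 'k::field"
  assumes diag: "\<And>u x. F u x x = iunit x u"
    and comm: "\<And>u v. imult (F u) (F v) = imult (F v) (F u)"
  obtains \<beta> where "\<beta> \<in> incidence" "\<forall>x. \<beta> x x = 1" "\<And>u. imult (F u) \<beta> = imult \<beta> (ebas u u)"
proof -
  define \<beta> where "\<beta> = (\<lambda>x v. back_subst (F v) v x)"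
  have \<beta>: "\<beta> \<in> incidence" unfolding \<beta>_def by (rule incidence_back_subst)
  have fixed: "imult (F v) \<beta> x v = \<beta> x v" for x v
    unfolding imult_def \<beta>_def by (rule back_subst_fixed) (simp_all add: diag iunit_def)
  have other: "imult (F u) \<beta> x v = 0" if "u \<noteq> v" for u x v
  proof (rule fixed_column_eq_0[where G = "F v" and W = "\<lambda>x. imult (F u) \<beta> x v"])
    show "(\<Sum>t\<in>{t. x \<le> t \<and> t \<le> v}. F v x t * imult (F u) \<beta> t v) = imult (F u) \<beta> x v" for x
    proof -
      have "(\<Sum>t\<in>{t. x \<le> t \<and> t \<le> v}. F v x t * imult (F u) \<beta> t v) = imult (F v) (imult (F u) \<beta>) x v"
        by (simp add: imult_def)
      also have "\<dots> = imult (F u) (imult (F v) \<beta>) x v"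
        by (simp only: imult_assoc[symmetric] comm)
      also have "\<dots> = imult (F u) \<beta> x v"
        unfolding imult_def[of "F u"] by (simp add: fixed)
      finally show ?thesis .
    qed
    show "imult (F u) \<beta> v v = 0" using that by (simp add: imult_diag diag iunit_def)
    show "F v x x = 0" if "x \<noteq> v" for x using that by (simp add: diag iunit_def)
  qed
  have "imult (F u) \<beta> x v = imult \<beta> (ebas u u) x v" for u x v
    by (cases "v = u") (auto simp: imult_ebas_right fixed other incidenceD[OF \<beta>])
  then have "imult (F u) \<beta> = imult \<beta> (ebas u u)" for u by blast
  moreover have "\<beta> x x = 1" for x by (simp add: \<beta>_def back_subst_self)
  ultimately show ?thesis using that \<beta> by blast
qed

section \<open>Length of intervals\<close>

lemma finite_card_minus_one_set: "finite {card C - 1 | C. P (C::'a::finite set)}"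
  by (rule finite_subset[of _ "(\<lambda>C. card C - 1) ` UNIV"]) auto

lemma ilen_ge:
  assumes "C \<subseteq> {x..y}" "C \<noteq> {}" "Complete_Partial_Order.chain (\<le>) (C::'a::{order,finite} set)"
  shows "card C - 1 \<le> ilen x y"
  unfolding ilen_def by (rule Max_ge[OF finite_card_minus_one_set]) (use assms in blast)

lemma ilen_attained:
  assumes "(x::'a::{order,finite}) \<le> y"
  obtains C where "C \<subseteq> {x..y}" "C \<noteq> {}" "Complete_Partial_Order.chain (\<le>) C" "card C - 1 = ilen x y"
proof -
  have "{x} \<subseteq> {x..y}" "Complete_Partial_Order.chain (\<le>) {x}"
    using assms by (simp_all add: chain_def)
  then have "ilen x y \<in> {card C - 1 | C. C \<subseteq> {x..y} \<and> C \<noteq> {} \<and> Complete_Partial_Order.chain (\<le>) C}"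
    unfolding ilen_def by (intro Max_in[OF finite_card_minus_one_set]) blast
  then show ?thesis using that by (elim CollectE exE conjE) simp
qed

lemma ilen_refl: "ilen (x::'a::{order,finite}) x = 0"
proof -
  obtain C where C: "C \<subseteq> {x..x}" "C \<noteq> {}" "Complete_Partial_Order.chain (\<le>) C" "card C - 1 = ilen x x"
    by (rule ilen_attained[OF order_refl])
  then have "C = {x}" by (simp add: subset_singleton_iff)
  with C(4) show ?thesis by simp
qed

lemma ilen_strict_mono:
  assumes "(u::'a::{order,finite}) \<le> x" "x \<le> y" "y \<le> v" "(u, v) \<noteq> (x, y)"
  shows "ilen x y < ilen u v"
proof -
  obtain C where C: "C \<subseteq> {x..y}" "C \<noteq> {}" "Complete_Partial_Order.chain (\<le>) C" "card C - 1 = ilen x y"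
    by (rule ilen_attained[OF assms(2)])
  have in_uv: "u \<le> c \<and> c \<le> v" if "c \<in> C" for c
    using C(1) that assms(1,3) by (meson atLeastAtMost_iff order_trans subsetD)
  define w where "w = (if u = x then v else u)"
  have "w \<notin> C"
  proof
    assume "w \<in> C"
    then have "x \<le> w" "w \<le> y" using C(1) by auto
    then show False
      using assms order.antisym[of u x] order.antisym[of y v] by (cases "u = x") (simp_all add: w_def)
  qed
  moreover have "insert w C \<subseteq> {u..v}"
    using in_uv order_trans[OF order_trans[OF assms(1,2)] assms(3)] by (auto simp: w_def)
  moreover have "Complete_Partial_Order.chain (\<le>) (insert w C)"
    using C(3) in_uv unfolding chain_def by (auto simp: w_def)
  ultimately have "card (insert w C) - 1 \<le> ilen u v"
    by (intro ilen_ge) auto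
  moreover have "card C > 0" using C(2) by (simp add: card_gt_0_iff)
  moreover have "card (insert w C) = Suc (card C)" using \<open>w \<notin> C\<close> by simp
  ultimately show ?thesis using C(4) by linarith
qed

section \<open>Linear maps and conjugations\<close>

definition incidence_linear :: "(('a::{order,finite} \<Rightarrow> 'a \<Rightarrow> 'k::field) \<Rightarrow> ('a \<Rightarrow> 'a \<Rightarrow> 'k)) \<Rightarrow> bool" where
  "incidence_linear A \<longleftrightarrow> (\<forall>f\<in>incidence. \<forall>g\<in>incidence. A (f + g) = A f + A g)
      \<and> (\<forall>c. \<forall>f\<in>incidence. A (\<lambda>x y. c * f x y) = (\<lambda>x y. c * A f x y))"

lemma LAut_iff:
  "\<phi> \<in> LAut \<longleftrightarrow> bij_betw \<phi> incidence incidence \<and> incidence_linear \<phi>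
      \<and> (\<forall>f\<in>incidence. \<forall>g\<in>incidence. \<phi> (ibracket f g) = ibracket (\<phi> f) (\<phi> g))"
  by (auto simp: LAut_def incidence_linear_def)

lemma incidence_linear_add:
  "incidence_linear A \<Longrightarrow> f \<in> incidence \<Longrightarrow> g \<in> incidence \<Longrightarrow> A (f + g) = A f + A g"
  by (simp add: incidence_linear_def)

lemma incidence_linear_smult:
  "incidence_linear A \<Longrightarrow> f \<in> incidence \<Longrightarrow> A (\<lambda>x y. c * f x y) = (\<lambda>x y. c * A f x y)"
  by (simp add: incidence_linear_def)

lemma incidence_linear_zero: "incidence_linear A \<Longrightarrow> A 0 = 0"
  using incidence_zero unfolding incidence_linear_def by (metis add_cancel_right_right add_0)

lemma incidence_linear_sum:
  assumes "incidence_linear A" "\<And>p. p \<in> S \<Longrightarrow> F p \<in> incidence"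
  shows "A (sum F S) = (\<Sum>p\<in>S. A (F p))"
  using assms(2)
proof (induction S rule: infinite_finite_induct)
  case (insert p S)
  then have "A (F p + sum F S) = A (F p) + A (sum F S)"
    by (intro incidence_linear_add[OF assms(1)] incidence_sum) auto
  moreover have "A (sum F S) = (\<Sum>p\<in>S. A (F p))"
    using insert.IH insert.prems by blast
  ultimately show ?case by (simp only: sum.insert[OF insert.hyps])
qed (simp_all add: incidence_linear_zero[OF assms(1)])

lemma incidence_eq_sum_ebas:
  assumes "f \<in> incidence"
  shows "f = (\<Sum>p\<in>{p. fst p \<le> snd p}. (\<lambda>u v. f (fst p) (snd p) * ebas (fst p) (snd p) u v))"
proof -
  have "(\<Sum>p\<in>{p. fst p \<le> snd p}. (\<lambda>u v. f (fst p) (snd p) * ebas (fst p) (snd p) u v)) u v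
      = (\<Sum>p\<in>{p. fst p \<le> snd p}. if p = (u, v) then f u v else 0)" for u v
    unfolding sum_fun_apply by (intro sum.cong refl) (auto simp: ebas_def)
  then show ?thesis using assms by (simp add: fun_eq_iff incidenceD)
qed

lemma incidence_linear_eqI:
  fixes A B :: "('a::{order,finite} \<Rightarrow> 'a \<Rightarrow> 'k::field) \<Rightarrow> 'a \<Rightarrow> 'a \<Rightarrow> 'k"
  assumes "incidence_linear A" "incidence_linear B"
    and "\<And>x y. x \<le> y \<Longrightarrow> A (ebas x y) = B (ebas x y)"
    and "f \<in> incidence"
  shows "A f = B f"
proof -
  let ?S = "{p. fst p \<le> snd p}"
  let ?T = "\<lambda>p u v. f (fst p) (snd p) * ebas (fst p) (snd p) u v"
  have incT: "?T p \<in> incidence" if "p \<in> ?S" for p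
    using that by (simp add: incidence_smult incidence_ebas)
  have "A f = A (sum ?T ?S)"
    using incidence_eq_sum_ebas[OF assms(4)] by (rule arg_cong)
  also have "\<dots> = (\<Sum>p\<in>?S. A (?T p))"
    using assms(1) incT by (rule incidence_linear_sum)
  also have "\<dots> = (\<Sum>p\<in>?S. B (?T p))"
  proof (rule sum.cong[OF refl])
    fix p :: "'a \<times> 'a" assume "p \<in> ?S"
    then have "(ebas (fst p) (snd p) :: 'a \<Rightarrow> 'a \<Rightarrow> 'k) \<in> incidence" "A (ebas (fst p) (snd p)) = B (ebas (fst p) (snd p))"
      by (simp_all add: incidence_ebas assms(3))
    then show "A (?T p) = B (?T p)"
      by (simp only: incidence_linear_smult[OF assms(1)] incidence_linear_smult[OF assms(2)])
  qed
  also have "\<dots> = B (sum ?T ?S)"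
    using assms(2) incT by (rule incidence_linear_sum[symmetric])
  also have "\<dots> = B f"
    using incidence_eq_sum_ebas[OF assms(4)] by (rule arg_cong[symmetric])
  finally show ?thesis .
qed

lemma incidence_linear_cong:
  "(\<And>f. f \<in> incidence \<Longrightarrow> A f = B f) \<Longrightarrow> incidence_linear A \<longleftrightarrow> incidence_linear B"
  by (simp add: incidence_linear_def incidence_add incidence_smult)

lemma imult_cancel_left:
  "imult \<gamma> \<beta> = iunit \<Longrightarrow> f \<in> incidence \<Longrightarrow> imult \<gamma> (imult \<beta> f) = f"
  by (simp add: imult_assoc[symmetric] imult_iunit_left)

definition iconj :: "('a::{order,finite} \<Rightarrow> 'a \<Rightarrow> 'k::field) \<Rightarrow> ('a \<Rightarrow> 'a \<Rightarrow> 'k) \<Rightarrow> ('a \<Rightarrow> 'a \<Rightarrow> 'k) \<Rightarrow> 'a \<Rightarrow> 'a \<Rightarrow> 'k" where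
  "iconj \<beta> \<gamma> f = imult (imult \<beta> f) \<gamma>"

lemma incidence_iconj: "iconj \<beta> \<gamma> f \<in> incidence"
  by (simp add: iconj_def incidence_imult)

lemma incidence_linear_iconj: "incidence_linear (iconj \<beta> \<gamma>)"
  by (simp add: incidence_linear_def iconj_def imult_add_left imult_add_right imult_smult_left imult_smult_right)

lemma iconj_iconj:
  "imult \<gamma> \<beta> = iunit \<Longrightarrow> f \<in> incidence \<Longrightarrow> iconj \<gamma> \<beta> (iconj \<beta> \<gamma> f) = f"
  by (simp add: iconj_def imult_assoc imult_cancel_left imult_iunit_right incidence_imult)

lemma bij_betw_iconj:
  assumes "imult \<beta> \<gamma> = iunit" "imult \<gamma> \<beta> = iunit"
  shows "bij_betw (iconj \<beta> \<gamma>) incidence incidence"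
  by (rule bij_betw_byWitness[where f' = "iconj \<gamma> \<beta>"]) (auto simp: iconj_iconj assms incidence_iconj)

lemma iconj_ibracket:
  assumes "imult \<gamma> \<beta> = iunit"
  shows "ibracket (iconj \<beta> \<gamma> f) (iconj \<beta> \<gamma> g) = iconj \<beta> \<gamma> (ibracket f g)"
  unfolding ibracket_def iconj_def imult_diff_left imult_diff_right
  by (simp add: imult_assoc imult_cancel_left[OF assms] incidence_imult)

lemma iconj_ebas_apply:
  assumes "x \<le> y"
  shows "iconj \<beta> \<gamma> (ebas x y) u v = (if u \<le> x \<and> y \<le> v then \<beta> u x * \<gamma> y v else 0)"
proof -
  have "iconj \<beta> \<gamma> (ebas x y) u v = (\<Sum>t\<in>{t. u \<le> t \<and> t \<le> v}. if t = y then (if u \<le> x then \<beta> u x * \<gamma> t v else 0) else 0)"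
    unfolding iconj_def imult_def[of "imult \<beta> (ebas x y)"] using assms
    by (intro sum.cong refl) (simp add: imult_ebas_right)
  also have "\<dots> = (if u \<le> x \<and> y \<le> v then \<beta> u x * \<gamma> y v else 0)"
    using assms by (auto dest: order_trans)
  finally show ?thesis .
qed

lemma Lcomp_smult: "Lcomp i (\<lambda>a b. c * f a b) = (\<lambda>a b. c * Lcomp i f a b)"
  by (simp add: Lcomp_def fun_eq_iff)

lemma Lcomp_iconj_ebas:
  assumes "x \<le> y" "\<forall>a. \<beta> a a = 1" "\<forall>a. \<gamma> a a = 1"
  shows "Lcomp (ilen x y) (iconj \<beta> \<gamma> (ebas x y)) = ebas x y"
proof (intro ext)
  fix u v
  show "Lcomp (ilen x y) (iconj \<beta> \<gamma> (ebas x y)) u v = ebas x y u v"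
  proof (cases "(u, v) = (x, y)")
    case True
    have "ebas x y x y = 1" by (simp add: ebas_def)
    with True show ?thesis using assms by (simp add: Lcomp_def iconj_ebas_apply ilen_refl)
  next
    case False
    then have "\<not> (u \<le> x \<and> y \<le> v \<and> ilen u v = ilen x y)"
      using ilen_strict_mono[of u x y v] assms(1) by auto
    moreover have "ebas x y u v = 0" using False by (simp add: ebas_def)
    ultimately show ?thesis by (auto simp: Lcomp_def iconj_ebas_apply[OF assms(1)])
  qed
qed

lemma tilde_ebas:
  assumes "x \<le> y"
  shows "tilde \<phi> (ebas x y) = Lcomp (ilen x y) (\<phi> (ebas x y))"
proof -
  have "tilde \<phi> (ebas x y) u v
      = (\<Sum>p\<in>{p. fst p \<le> snd p}. if p = (x, y) then Lcomp (ilen x y) (\<phi> (ebas x y)) u v else 0)" for u v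
    unfolding tilde_def sum_fun_apply by (intro sum.cong refl) (auto simp: ebas_def)
  then show ?thesis using assms by (simp add: fun_eq_iff)
qed

lemma incidence_linear_tilde: "incidence_linear (tilde \<phi>)"
  unfolding incidence_linear_def tilde_def
  by (simp add: fun_eq_iff sum_fun_apply algebra_simps sum.distrib sum_distrib_left)

lemma ibracket_ebas_diag:
  "h \<in> incidence \<Longrightarrow> ibracket (ebas u u) h = (\<lambda>a b. (iunit a u - iunit b u) * h a b)"
  by (auto simp: fun_eq_iff ibracket_def imult_ebas_left imult_ebas_right iunit_def incidenceD)

lemma ad_diag_eigenvector:
  fixes h :: "'a::{order,finite} \<Rightarrow> 'a \<Rightarrow> 'k::field"
  assumes h: "h \<in> incidence" and "x < y"
    and eigen: "\<And>u. ibracket (ebas u u) h = (\<lambda>a b. (iunit x u - iunit y u) * h a b)"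
  shows "h = (\<lambda>a b. h x y * ebas x y a b)"
proof (intro ext)
  fix a b
  have "h a b = 0" if "(a, b) \<noteq> (x, y)"
  proof (rule ccontr)
    assume "h a b \<noteq> 0"
    then have "a \<le> b" using h by (auto simp: incidence_def)
    have "iunit a u - iunit b u = (iunit x u - iunit y u :: 'k)" for u
      using fun_cong[OF fun_cong[OF eigen[of u]], of a b] \<open>h a b \<noteq> 0\<close> by (simp add: ibracket_ebas_diag[OF h])
    \<comment> \<open>in characteristic 2 the pair \<open>(y, x)\<close> has the same weights; \<open>a \<le> b\<close> excludes it\<close>
    from this[of x] this[of y] show False
      using \<open>a \<le> b\<close> \<open>x < y\<close> that by (auto simp: iunit_def split: if_splits)
  qed
  then show "h a b = h x y * ebas x y a b" by (auto simp: ebas_def)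
qed

section \<open>Lie automorphisms with trivial tilde\<close>

lemma Inn1_imp_LAut_tilde_id:
  fixes \<phi> :: "('a::{order,finite} \<Rightarrow> 'a \<Rightarrow> 'k::field) \<Rightarrow> 'a \<Rightarrow> 'a \<Rightarrow> 'k"
  assumes "Inn1 \<phi>"
  shows "\<phi> \<in> LAut" and "\<forall>f\<in>incidence. tilde \<phi> f = f"
proof -
  obtain \<beta> \<gamma> where \<beta>: "\<forall>x. \<beta> x x = 1" and inv: "imult \<beta> \<gamma> = iunit" "imult \<gamma> \<beta> = iunit"
    and \<phi>: "\<And>f. f \<in> incidence \<Longrightarrow> \<phi> f = iconj \<beta> \<gamma> f"
    using assms unfolding Inn1_def iconj_def by blast
  have "\<gamma> x x = 1" for x
    using imult_diag[of \<beta> \<gamma> x] \<beta> inv(1) by (simp add: iunit_def)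
  then have \<gamma>: "\<forall>x. \<gamma> x x = 1" ..
  have "bij_betw \<phi> incidence incidence"
    using bij_betw_iconj[OF inv] by (simp add: bij_betw_cong[of incidence \<phi> "iconj \<beta> \<gamma>"] \<phi>)
  moreover have "incidence_linear \<phi>"
    using incidence_linear_iconj by (subst incidence_linear_cong[OF \<phi>])
  moreover have "\<phi> (ibracket f g) = ibracket (\<phi> f) (\<phi> g)" if "f \<in> incidence" "g \<in> incidence" for f g
    using that by (simp add: \<phi> incidence_ibracket iconj_ibracket[OF inv(2)])
  ultimately show "\<phi> \<in> LAut" by (simp add: LAut_iff)
  have "tilde \<phi> f = f" if "f \<in> incidence" for f
  proof (rule incidence_linear_eqI[OF incidence_linear_tilde _ _ that])
    show "incidence_linear (\<lambda>f. f)" by (simp add: incidence_linear_def)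
    show "tilde \<phi> (ebas x y) = ebas x y" if "x \<le> y" for x y
      using Lcomp_iconj_ebas[of x y \<beta> \<gamma>, OF that \<beta> \<gamma>] by (simp add: tilde_ebas[OF that] \<phi> incidence_ebas[OF that])
  qed
  then show "\<forall>f\<in>incidence. tilde \<phi> f = f" by blast
qed

lemma tilde_id_Lcomp_ebas:
  fixes \<phi> :: "('a::{order,finite} \<Rightarrow> 'a \<Rightarrow> 'k::field) \<Rightarrow> 'a \<Rightarrow> 'a \<Rightarrow> 'k"
  assumes "\<forall>f\<in>incidence. tilde \<phi> f = f" "x \<le> y"
  shows "Lcomp (ilen x y) (\<phi> (ebas x y)) = ebas x y"
proof -
  have "tilde \<phi> (ebas x y) = ebas x y" using assms(1) incidence_ebas[OF assms(2)] by blast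
  then show ?thesis by (simp add: tilde_ebas[OF assms(2)])
qed

lemma LAut_tilde_id_diag_conj:
  fixes \<phi> :: "('a::{order,finite} \<Rightarrow> 'a \<Rightarrow> 'k::field) \<Rightarrow> 'a \<Rightarrow> 'a \<Rightarrow> 'k"
  assumes "\<phi> \<in> LAut" "\<forall>f\<in>incidence. tilde \<phi> f = f"
  obtains \<beta> \<gamma> where "\<beta> \<in> incidence" "\<gamma> \<in> incidence" "\<forall>x. \<beta> x x = 1" "\<forall>x. \<gamma> x x = 1"
    "imult \<beta> \<gamma> = iunit" "imult \<gamma> \<beta> = iunit" "\<forall>u. \<phi> (ebas u u) = iconj \<beta> \<gamma> (ebas u u)"
proof -
  have bij: "bij_betw \<phi> incidence incidence" and lin: "incidence_linear \<phi>"
    and hom: "\<forall>f\<in>incidence. \<forall>g\<in>incidence. \<phi> (ibracket f g) = ibracket (\<phi> f) (\<phi> g)"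
    using assms(1) by (simp_all add: LAut_iff)
  define F where "F u = \<phi> (ebas u u)" for u
  have F_inc: "F u \<in> incidence" for u
    unfolding F_def by (rule bij_betw_apply[OF bij incidence_ebas[OF order_refl]])
  have F_diag: "F u x x = iunit x u" for u x
    using fun_cong[OF fun_cong[OF tilde_id_Lcomp_ebas[OF assms(2) order_refl[of u]]], of x x]
    by (simp add: F_def Lcomp_def ilen_refl ebas_def iunit_def)
  have F_comm: "imult (F u) (F v) = imult (F v) (F u)" for u v
  proof -
    have "ibracket (ebas u u) (ebas v v) = (0 :: 'a \<Rightarrow> 'a \<Rightarrow> 'k)"
      by (subst ibracket_ebas_diag[OF incidence_ebas[OF order_refl]]) (auto simp: fun_eq_iff ebas_def iunit_def)
    moreover have "ibracket (F u) (F v) = \<phi> (ibracket (ebas u u) (ebas v v))"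
      unfolding F_def using hom by (simp add: incidence_ebas)
    ultimately show ?thesis by (simp add: ibracket_def incidence_linear_zero[OF lin])
  qed
  obtain \<beta> where \<beta>: "\<beta> \<in> incidence" "\<forall>x. \<beta> x x = 1" "\<And>u. imult (F u) \<beta> = imult \<beta> (ebas u u)"
    using commuting_family_simultaneous_conj[OF F_diag F_comm] by blast
  obtain \<gamma> where \<gamma>: "\<gamma> \<in> incidence" "\<forall>x. \<gamma> x x = 1" "imult \<beta> \<gamma> = iunit" "imult \<gamma> \<beta> = iunit"
    by (rule unit_diag_invertible[OF \<beta>(1,2)])
  have "\<phi> (ebas u u) = iconj \<beta> \<gamma> (ebas u u)" for u
  proof -
    have "\<phi> (ebas u u) = imult (F u) (imult \<beta> \<gamma>)"
      by (simp add: F_def \<gamma>(3) imult_iunit_right F_inc[unfolded F_def])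
    also have "\<dots> = iconj \<beta> \<gamma> (ebas u u)"
      by (simp add: iconj_def imult_assoc[symmetric] \<beta>(3))
    finally show ?thesis .
  qed
  then show ?thesis using that \<beta>(1,2) \<gamma> by blast
qed

lemma LAut_diag_conj_ebas_multiple:
  fixes \<phi> :: "('a::{order,finite} \<Rightarrow> 'a \<Rightarrow> 'k::field) \<Rightarrow> 'a \<Rightarrow> 'a \<Rightarrow> 'k"
  assumes "\<phi> \<in> LAut" and inv: "imult \<beta> \<gamma> = iunit" "imult \<gamma> \<beta> = iunit"
    and diag: "\<forall>u. \<phi> (ebas u u) = iconj \<beta> \<gamma> (ebas u u)"
    and "x < y"
  obtains c where "\<phi> (ebas x y) = (\<lambda>a b. c * iconj \<beta> \<gamma> (ebas x y) a b)"
proof -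
  have bij: "bij_betw \<phi> incidence incidence" and lin: "incidence_linear \<phi>"
    and hom: "\<forall>f\<in>incidence. \<forall>g\<in>incidence. \<phi> (ibracket f g) = ibracket (\<phi> f) (\<phi> g)"
    using assms(1) by (simp_all add: LAut_iff)
  have e_inc: "ebas x y \<in> incidence" using \<open>x < y\<close> by (simp add: incidence_ebas)
  have \<phi>_inc: "\<phi> (ebas x y) \<in> incidence" by (rule bij_betw_apply[OF bij e_inc])
  define h where "h = iconj \<gamma> \<beta> (\<phi> (ebas x y))"
  have eigen: "ibracket (ebas u u) h = (\<lambda>a b. (iunit x u - iunit y u) * h a b)" for u
  proof -
    let ?c = "iunit x u - iunit y u :: 'k"
    have e_uu: "iconj \<gamma> \<beta> (\<phi> (ebas u u)) = ebas u u"
      by (simp add: diag iconj_iconj[OF inv(2)] incidence_ebas)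
    have "ibracket (ebas u u) (ebas x y) = (\<lambda>a b. ?c * ebas x y a b)"
      by (subst ibracket_ebas_diag[OF e_inc]) (auto simp: fun_eq_iff ebas_def)
    have "ibracket (\<phi> (ebas u u)) (\<phi> (ebas x y)) = \<phi> (ibracket (ebas u u) (ebas x y))"
      by (rule hom[rule_format, symmetric, OF incidence_ebas[OF order_refl] e_inc])
    also have "\<dots> = (\<lambda>a b. ?c * \<phi> (ebas x y) a b)"
      by (simp only: \<open>ibracket (ebas u u) (ebas x y) = _\<close> incidence_linear_smult[OF lin e_inc])
    finally have "iconj \<gamma> \<beta> (ibracket (\<phi> (ebas u u)) (\<phi> (ebas x y))) = (\<lambda>a b. ?c * h a b)"
      using \<phi>_inc by (simp add: h_def incidence_linear_smult[OF incidence_linear_iconj])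
    then show ?thesis
      by (simp only: h_def iconj_ibracket[OF inv(1), symmetric] e_uu)
  qed
  have h: "h = (\<lambda>a b. h x y * ebas x y a b)"
    using incidence_iconj \<open>x < y\<close> eigen unfolding h_def by (rule ad_diag_eigenvector)
  have "\<phi> (ebas x y) = iconj \<beta> \<gamma> h"
    by (simp add: h_def iconj_iconj[OF inv(1) \<phi>_inc])
  also have "\<dots> = (\<lambda>a b. h x y * iconj \<beta> \<gamma> (ebas x y) a b)"
    by (subst h) (simp add: incidence_linear_smult[OF incidence_linear_iconj e_inc])
  finally show ?thesis by (rule that)
qed

lemma LAut_tilde_id_ebas_conj:
  fixes \<phi> :: "('a::{order,finite} \<Rightarrow> 'a \<Rightarrow> 'k::field) \<Rightarrow> 'a \<Rightarrow> 'a \<Rightarrow> 'k"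
  assumes "\<phi> \<in> LAut" "\<forall>f\<in>incidence. tilde \<phi> f = f"
    and inv: "imult \<beta> \<gamma> = iunit" "imult \<gamma> \<beta> = iunit" and "\<forall>x. \<beta> x x = 1" "\<forall>x. \<gamma> x x = 1"
    and diag: "\<forall>u. \<phi> (ebas u u) = iconj \<beta> \<gamma> (ebas u u)"
    and "x < y"
  shows "\<phi> (ebas x y) = iconj \<beta> \<gamma> (ebas x y)"
proof -
  obtain c where c: "\<phi> (ebas x y) = (\<lambda>a b. c * iconj \<beta> \<gamma> (ebas x y) a b)"
    by (rule LAut_diag_conj_ebas_multiple[OF assms(1) inv diag \<open>x < y\<close>])
  have "x \<le> y" using \<open>x < y\<close> by simp
  have "ebas x y = (\<lambda>a b. c * ebas x y a b)"
    using tilde_id_Lcomp_ebas[OF assms(2) \<open>x \<le> y\<close>]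
    by (simp add: c Lcomp_smult Lcomp_iconj_ebas \<open>x \<le> y\<close> assms(5,6))
  from fun_cong[OF fun_cong[OF this, of x], of y] have "c = 1"
    by (simp add: ebas_def)
  with c show ?thesis by simp
qed

lemma LAut_tilde_id_imp_Inn1:
  fixes \<phi> :: "('a::{order,finite} \<Rightarrow> 'a \<Rightarrow> 'k::field) \<Rightarrow> 'a \<Rightarrow> 'a \<Rightarrow> 'k"
  assumes "\<phi> \<in> LAut" "\<forall>f\<in>incidence. tilde \<phi> f = f"
  shows "Inn1 \<phi>"
proof -
  obtain \<beta> \<gamma> where \<beta>\<gamma>: "\<beta> \<in> incidence" "\<gamma> \<in> incidence" "\<forall>x. \<beta> x x = 1" "\<forall>x. \<gamma> x x = 1"
      "imult \<beta> \<gamma> = iunit" "imult \<gamma> \<beta> = iunit" and diag: "\<forall>u. \<phi> (ebas u u) = iconj \<beta> \<gamma> (ebas u u)"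
    by (rule LAut_tilde_id_diag_conj[OF assms])
  have on_basis: "\<phi> (ebas x y) = iconj \<beta> \<gamma> (ebas x y)" if "x \<le> y" for x y
  proof (cases "x = y")
    case True
    with diag show ?thesis by simp
  next
    case False
    with that have "x < y" by simp
    then show ?thesis by (rule LAut_tilde_id_ebas_conj[OF assms \<beta>\<gamma>(5,6,3,4) diag])
  qed
  have "incidence_linear \<phi>" using assms(1) by (simp add: LAut_iff)
  then have "\<phi> f = iconj \<beta> \<gamma> f" if "f \<in> incidence" for f
    using incidence_linear_iconj on_basis that by (rule incidence_linear_eqI)
  with \<beta>\<gamma>(1-6) show ?thesis unfolding Inn1_def iconj_def by blast
qed

theorem proposition4p14:
  assumes "poset_connected TYPE('a::{order,finite})"
  shows "(\<phi> \<in> (LAut :: (('a \<Rightarrow> 'a \<Rightarrow> 'k::field) \<Rightarrow> _) set)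
            \<and> (\<forall>f\<in>incidence. tilde \<phi> f = f))
         \<longleftrightarrow> Inn1 \<phi>"
  using LAut_tilde_id_imp_Inn1 Inn1_imp_LAut_tilde_id by blast

end
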